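(* Let $\psi\colon G\times Y\times Y\to\mathbb C$. Then $\psi\in\mathcal A$ if and only if $\psi\in\mathcal A_0$ and the linear operator $\widetilde S_\psi\colon\mathcal D\to H$ is bounded, i.e. $\sup\{\|\widetilde S_\psi f\|: f\in\mathcal D,\ \|f\|=1\}<\infty$.
   Context: Let $G$ be a locally compact abelian group (written additively) with Haar measure $\nu$, and $(Y,\lambda)$ a measure space. Let $H$ be a reproducing kernel Hilbert space of complex functions on $G\times Y$ whose inner product is that of $L^2(G\times Y,\nu\otimes\lambda)$, with reproducing kernel $(K_{x,y})_{(x,y)\in G\times Y}$ (so $f(x,y)=\langle f,K_{x,y}\rangle$). Assume $K_{x,y}(u,v)=K_{0,y}(u-x,v)$ for all $u,x\in G$, $v,y\in Y$ (so $H$ is invariant under $f\mapsto f(\cdot-a,\cdot)$). Let $\mathcal A_0$ be the set of functions $\psi\colon G\times Y\times Y\to\mathbb C$ such that $\psi(\cdot,\cdot,v)\in H$ for every $v\in Y$ and $(u,v)\mapsto\overline{\psi(-u,y,v)}$ belongs to $H$ for every $y\in Y$. For $\psi\in\mathcal A_0$, $f\in H$, define the function $(S_\psi f)(x,y)=\int_{G\times Y}f(u,v)\psi(x-u,y,v)\,d\nu(u)\,d\lambda(v)$ (absolutely convergent). Let $\mathcal A$ be the set of $\psi\in\mathcal A_0$ such that $S_\psi f\in H$ for every $f\in H$ and $f\mapsto S_\psi f$ is bounded on $H$. Let $\mathcal D=\operatorname{span}\{K_{p,q}: p\in G,\ q\in Y\}$, and for $\psi\in\mathcal A_0$ let $\widetilde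 S_\psi$ be the restriction of $f\mapsto S_\psi f$ to $\mathcal D$ (it is known that it maps $\mathcal D$ into $H$, with $(\widetilde S_\psi K_{p,q})(x,y)=\psi(x-p,y,q)$). *)

theory Defs
  imports "HOL-Analysis.Analysis"
begin

definition haar_measure :: "'g::topological_ab_group_add measure \<Rightarrow> bool" where
  "haar_measure nu \<longleftrightarrow>
     sets nu = sets borel
   \<and> (\<forall>a. distr nu nu (\<lambda>u. a + u) = nu)
   \<and> (\<forall>C. compact C \<longrightarrow> emeasure nu C < \<infinity>)
   \<and> (\<forall>U. open U \<and> U \<noteq> {} \<longrightarrow> emeasure nu U > 0)
   \<and> (\<forall>A\<in>sets borel. emeasure nu A = (INF U\<in>{U. open U \<and> A \<subseteq> U}. emeasure nu U))
   \<and> (\<forall>U. open U \<longrightarrow> emeasure nu U = (SUP C\<in>{C. compact C \<and> C \<subseteq> U}. emeasure nu C))"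

definition l2inner :: "'a measure \<Rightarrow> ('a \<Rightarrow> complex) \<Rightarrow> ('a \<Rightarrow> complex) \<Rightarrow> complex" where
  "l2inner M f g = integral\<^sup>L M (\<lambda>z. f z * cnj (g z))"

definition l2norm :: "'a measure \<Rightarrow> ('a \<Rightarrow> complex) \<Rightarrow> real" where
  "l2norm M f = sqrt (integral\<^sup>L M (\<lambda>z. (cmod (f z))\<^sup>2))"

definition rkhs_L2 :: "'a measure \<Rightarrow> ('a \<Rightarrow> complex) set \<Rightarrow> ('a \<Rightarrow> 'a \<Rightarrow> complex) \<Rightarrow> bool" where
  "rkhs_L2 M H K \<longleftrightarrow>
     (\<forall>f\<in>H. f \<in> borel_measurable M \<and> integrable M (\<lambda>z. (cmod (f z))\<^sup>2))
   \<and> (\<lambda>z. 0) \<in> H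
   \<and> (\<forall>f\<in>H. \<forall>g\<in>H. (\<lambda>z. f z + g z) \<in> H)
   \<and> (\<forall>c. \<forall>f\<in>H. (\<lambda>z. c * f z) \<in> H)
   \<and> (\<forall>s. (\<forall>n. s n \<in> H) \<and>
          (\<forall>e>0. \<exists>N. \<forall>m\<ge>N. \<forall>n\<ge>N. l2norm M (\<lambda>z. s m z - s n z) < e)
        \<longrightarrow> (\<exists>f\<in>H. (\<lambda>n. l2norm M (\<lambda>z. s n z - f z)) \<longlonglongrightarrow> 0))
   \<and> (\<forall>z. K z \<in> H)
   \<and> (\<forall>f\<in>H. \<forall>z. f z = l2inner M f (K z))"

definition A0 :: "('g::ab_group_add \<times> 'y \<Rightarrow> complex) set \<Rightarrow> ('g \<Rightarrow> 'y \<Rightarrow> 'y \<Rightarrow> complex) set" where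
  "A0 H = {psi. (\<forall>v. (\<lambda>(u,y). psi u y v) \<in> H) \<and> (\<forall>y. (\<lambda>(u,v). cnj (psi (-u) y v)) \<in> H)}"

definition S_op :: "'g::ab_group_add measure \<Rightarrow> 'y measure \<Rightarrow> ('g \<Rightarrow> 'y \<Rightarrow> 'y \<Rightarrow> complex)
    \<Rightarrow> ('g \<times> 'y \<Rightarrow> complex) \<Rightarrow> ('g \<times> 'y \<Rightarrow> complex)" where
  "S_op nu lam psi f = (\<lambda>(x,y). integral\<^sup>L (nu \<Otimes>\<^sub>M lam) (\<lambda>(u,v). f (u,v) * psi (x - u) y v))"

definition bounded_on :: "'a measure \<Rightarrow> ('a \<Rightarrow> complex) set \<Rightarrow> (('a \<Rightarrow> complex) \<Rightarrow> ('a \<Rightarrow> complex)) \<Rightarrow> bool" where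
  "bounded_on M H T \<longleftrightarrow> (\<exists>C. \<forall>f\<in>H. l2norm M (T f) \<le> C * l2norm M f)"

definition A_class :: "'g::ab_group_add measure \<Rightarrow> 'y measure \<Rightarrow> ('g \<times> 'y \<Rightarrow> complex) set
    \<Rightarrow> ('g \<Rightarrow> 'y \<Rightarrow> 'y \<Rightarrow> complex) set" where
  "A_class nu lam H = {psi. psi \<in> A0 H \<and> (\<forall>f\<in>H. S_op nu lam psi f \<in> H)
                          \<and> bounded_on (nu \<Otimes>\<^sub>M lam) H (S_op nu lam psi)}"

definition kernel_span :: "('a \<Rightarrow> 'a \<Rightarrow> complex) \<Rightarrow> ('a \<Rightarrow> complex) set" where
  "kernel_span K = {f. \<exists>F c. finite F \<and> f = (\<lambda>z. \<Sum>p\<in>F. c p * K p z)}"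

end

(*
  Write S_psi f (z) = <f, h_z> with h_z (w) = cnj (psi (z1 - w1, z2, w2)).  Translations
  preserve the Haar measure and map kernels to kernels, and the kernels span a dense subspace
  of H, so H is translation invariant; hence psi in A_0 gives h_z in H and S_psi K_p in H,
  i.e. S_psi maps D into H.  If it is bounded there, it extends by continuity: for d_n -> f
  in D the images S_psi d_n form a Cauchy sequence in H whose limit is their pointwise limit
  <f, h_z> = S_psi f (z), point evaluations being continuous on H.
*)
theory Submission
  imports Defs
begin

section \<open>Translation invariance of the product with a Haar measure\<close>

lemma nn_integral_translate_le:
  fixes nu :: "'g::topological_ab_group_add measure"
  assumes sets: "sets nu = sets borel" and inv: "\<And>a. distr nu nu (\<lambda>u. a + u) = nu"
  shows "(\<integral>\<^sup>+x. F (a + x) \<partial>nu) \<le> (\<integral>\<^sup>+x. F x \<partial>nu)"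
  unfolding nn_integral_def[of nu "\<lambda>x. F (a + x)"]
proof (rule SUP_least)
  have translate_meas: "(\<lambda>u. b + u) \<in> measurable nu nu" for b
    unfolding measurable_cong_sets[OF sets sets]
    by (intro borel_measurable_continuous_onI continuous_intros)
  fix g assume "g \<in> {g. simple_function nu g \<and> g \<le> (\<lambda>x. F (a + x))}"
  then have g: "simple_function nu g" and g_le: "\<And>x. g x \<le> F (a + x)" by (auto simp: le_fun_def)
  define g' where "g' = (\<lambda>x. g (-a + x))"
  have g'_meas: "g' \<in> borel_measurable nu"
    unfolding g'_def using translate_meas borel_measurable_simple_function[OF g] by measurable
  have "g = (\<lambda>x. g' (a + x))" unfolding g'_def by (simp add: add.assoc[symmetric])
  then have "integral\<^sup>S nu g = integral\<^sup>N nu g'"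
    using nn_integral_eq_simple_integral[OF g] nn_integral_distr[OF translate_meas[of a], of g']
      inv[of a] g'_meas
    by simp
  also have "\<dots> \<le> (\<integral>\<^sup>+x. F x \<partial>nu)"
    by (rule nn_integral_mono) (use g_le[of "-a + x" for x] in \<open>simp add: g'_def add.assoc[symmetric]\<close>)
  finally show "integral\<^sup>S nu g \<le> (\<integral>\<^sup>+x. F x \<partial>nu)" .
qed

lemma nn_integral_translate:
  fixes nu :: "'g::topological_ab_group_add measure"
  assumes "sets nu = sets borel" and "\<And>a. distr nu nu (\<lambda>u. a + u) = nu"
  shows "(\<integral>\<^sup>+x. F (a + x) \<partial>nu) = (\<integral>\<^sup>+x. F x \<partial>nu)"
proof (rule antisym)
  show "(\<integral>\<^sup>+x. F (a + x) \<partial>nu) \<le> (\<integral>\<^sup>+x. F x \<partial>nu)"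
    by (rule nn_integral_translate_le[OF assms])
  have "(\<integral>\<^sup>+x. F x \<partial>nu) = (\<integral>\<^sup>+x. (\<lambda>y. F (a + y)) (-a + x) \<partial>nu)"
    by (simp add: add.assoc[symmetric])
  also have "\<dots> \<le> (\<integral>\<^sup>+x. F (a + x) \<partial>nu)"
    by (rule nn_integral_translate_le[OF assms])
  finally show "(\<integral>\<^sup>+x. F x \<partial>nu) \<le> (\<integral>\<^sup>+x. F (a + x) \<partial>nu)" .
qed

text \<open>No \<sigma>-finiteness of \<open>lam\<close> is assumed, so the product measure is handled through
  its defining iterated integral, whose inner integral need not be measurable.\<close>
lemma
  fixes nu :: "'g::topological_ab_group_add measure"
  assumes sets: "sets nu = sets borel" and inv: "\<And>a. distr nu nu (\<lambda>u. a + u) = nu"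
    and space_lam: "space lam = UNIV"
  shows measurable_translate_fst: "(\<lambda>w. (a + fst w, snd w)) \<in> measurable (nu \<Otimes>\<^sub>M lam) (nu \<Otimes>\<^sub>M lam)"
    and distr_translate_fst: "distr (nu \<Otimes>\<^sub>M lam) (nu \<Otimes>\<^sub>M lam) (\<lambda>w. (a + fst w, snd w)) = nu \<Otimes>\<^sub>M lam"
proof -
  let ?T = "\<lambda>w. (a + fst w, snd w)"
  have "(\<lambda>u. a + u) \<in> measurable nu nu"
    unfolding measurable_cong_sets[OF sets sets]
    by (intro borel_measurable_continuous_onI continuous_intros)
  then show T: "?T \<in> measurable (nu \<Otimes>\<^sub>M lam) (nu \<Otimes>\<^sub>M lam)" by measurable
  define \<Omega> where "\<Omega> = space nu \<times> space lam"
  define A where "A = {a \<times> b | a b. a \<in> sets nu \<and> b \<in> sets lam}"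
  define \<mu> where "\<mu> = (\<lambda>X. \<integral>\<^sup>+x. (\<integral>\<^sup>+y. indicator X (x,y) \<partial>lam) \<partial>nu)"
  have emeasure_pair: "emeasure (nu \<Otimes>\<^sub>M lam) X
      = (if X \<in> sigma_sets \<Omega> A \<and> measure_space \<Omega> (sigma_sets \<Omega> A) \<mu> then \<mu> X else 0)" for X
    unfolding pair_measure_def \<Omega>_def A_def \<mu>_def by (simp only: emeasure_measure_of_conv)
  have sets_pair: "sets (nu \<Otimes>\<^sub>M lam) = sigma_sets \<Omega> A"
    unfolding \<Omega>_def A_def by (rule sets_pair_measure)
  have space_nu: "space nu = UNIV" using sets_eq_imp_space_eq[OF sets] by simp
  show "distr (nu \<Otimes>\<^sub>M lam) (nu \<Otimes>\<^sub>M lam) ?T = nu \<Otimes>\<^sub>M lam"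
  proof (rule measure_eqI)
    fix X assume "X \<in> sets (distr (nu \<Otimes>\<^sub>M lam) (nu \<Otimes>\<^sub>M lam) ?T)"
    then have X: "X \<in> sets (nu \<Otimes>\<^sub>M lam)" by simp
    define Y where "Y = ?T -` X \<inter> space (nu \<Otimes>\<^sub>M lam)"
    have Y: "Y \<in> sets (nu \<Otimes>\<^sub>M lam)" unfolding Y_def using T X by (rule measurable_sets)
    have "\<mu> Y = (\<integral>\<^sup>+x. (\<lambda>x. \<integral>\<^sup>+y. indicator X (x,y) \<partial>lam) (a + x) \<partial>nu)"
      unfolding \<mu>_def Y_def by (simp add: space_pair_measure space_nu space_lam indicator_def)
    also have "\<dots> = \<mu> X" unfolding \<mu>_def by (rule nn_integral_translate[OF sets inv])
    finally show "emeasure (distr (nu \<Otimes>\<^sub>M lam) (nu \<Otimes>\<^sub>M lam) ?T) X = emeasure (nu \<Otimes>\<^sub>M lam) X"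
      using X Y sets_pair by (simp add: emeasure_distr[OF T X] emeasure_pair Y_def[symmetric])
  qed simp
qed

section \<open>Square-integrable functions\<close>

definition square_integrable :: "'a measure \<Rightarrow> ('a \<Rightarrow> complex) \<Rightarrow> bool" where
  "square_integrable M f \<longleftrightarrow> f \<in> borel_measurable M \<and> integrable M (\<lambda>z. (cmod (f z))\<^sup>2)"

definition l2norm_sq :: "'a measure \<Rightarrow> ('a \<Rightarrow> complex) \<Rightarrow> real" where
  "l2norm_sq M f = integral\<^sup>L M (\<lambda>z. (cmod (f z))\<^sup>2)"

lemma l2norm_sq_nonneg: "0 \<le> l2norm_sq M f"
  unfolding l2norm_sq_def by simp

lemma l2norm_eq_sqrt: "l2norm M f = sqrt (l2norm_sq M f)"
  unfolding l2norm_def l2norm_sq_def ..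

lemma l2norm_power2: "(l2norm M f)\<^sup>2 = l2norm_sq M f"
  by (simp add: l2norm_eq_sqrt l2norm_sq_nonneg)

lemma l2norm_nonneg: "0 \<le> l2norm M f"
  by (simp add: l2norm_eq_sqrt l2norm_sq_nonneg)

lemma l2norm_zero: "l2norm M (\<lambda>z. 0) = 0"
  unfolding l2norm_def by simp

lemma l2norm_sq_scale: "l2norm_sq M (\<lambda>z. c * f z) = (cmod c)\<^sup>2 * l2norm_sq M f"
  unfolding l2norm_sq_def by (simp add: norm_mult power_mult_distrib)

lemma l2norm_scale: "l2norm M (\<lambda>z. c * f z) = cmod c * l2norm M f"
  unfolding l2norm_eq_sqrt l2norm_sq_scale by (simp add: real_sqrt_mult)

lemma l2norm_minus_commute: "l2norm M (\<lambda>z. f z - g z) = l2norm M (\<lambda>z. g z - f z)"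
  unfolding l2norm_def by (simp add: norm_minus_commute)

lemma square_integrable_zero: "square_integrable M (\<lambda>z. 0)"
  unfolding square_integrable_def by simp

lemma square_integrable_scale:
  assumes "square_integrable M f"
  shows "square_integrable M (\<lambda>z. c * f z)"
  using assms unfolding square_integrable_def
  by (simp add: borel_measurable_times norm_mult power_mult_distrib)

lemma square_integrable_add:
  assumes "square_integrable M f" and "square_integrable M g"
  shows "square_integrable M (\<lambda>z. f z + g z)"
  unfolding square_integrable_def
proof
  have [measurable]: "f \<in> borel_measurable M" "g \<in> borel_measurable M"
    using assms unfolding square_integrable_def by auto
  show "(\<lambda>z. f z + g z) \<in> borel_measurable M" by measurable
  have bound: "(cmod (x + y))\<^sup>2 \<le> 2 * (cmod x)\<^sup>2 + 2 * (cmod y)\<^sup>2" for x y :: complex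
  proof -
    have "(cmod (x + y))\<^sup>2 \<le> (cmod x + cmod y)\<^sup>2"
      by (simp add: norm_triangle_ineq power_mono)
    also have "\<dots> \<le> 2 * (cmod x)\<^sup>2 + 2 * (cmod y)\<^sup>2"
      using sum_squares_bound[of "cmod x" "cmod y"] by (simp add: power2_sum)
    finally show ?thesis .
  qed
  show "integrable M (\<lambda>z. (cmod (f z + g z))\<^sup>2)"
  proof (rule Bochner_Integration.integrable_bound)
    show "integrable M (\<lambda>z. 2 * (cmod (f z))\<^sup>2 + 2 * (cmod (g z))\<^sup>2)"
      using assms unfolding square_integrable_def by simp
    show "(\<lambda>z. (cmod (f z + g z))\<^sup>2) \<in> borel_measurable M" by measurable
    show "AE z in M. norm ((cmod (f z + g z))\<^sup>2) \<le> norm (2 * (cmod (f z))\<^sup>2 + 2 * (cmod (g z))\<^sup>2)"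
      using bound by (auto simp del: norm_triangle_ineq)
  qed
qed

lemma square_integrable_diff:
  assumes "square_integrable M f" and "square_integrable M g"
  shows "square_integrable M (\<lambda>z. f z - g z)"
  using square_integrable_add[OF assms(1) square_integrable_scale[OF assms(2), of "-1"]] by simp

lemma square_integrable_sum:
  assumes "finite F" and "\<And>p. p \<in> F \<Longrightarrow> square_integrable M (G p)"
  shows "square_integrable M (\<lambda>z. \<Sum>p\<in>F. c p * G p z)"
  using assms
proof (induction F rule: finite_induct)
  case empty then show ?case by (simp add: square_integrable_zero)
next
  case (insert x F)
  then show ?case
    using square_integrable_add[OF square_integrable_scale[of M "G x" "c x"]] by simp
qed

lemma square_integrable_integrable_mult_cnj:
  assumes "square_integrable M f" and "square_integrable M g"
  shows "integrable M (\<lambda>z. f z * cnj (g z))"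
proof (rule Bochner_Integration.integrable_bound)
  show "integrable M (\<lambda>z. (cmod (f z))\<^sup>2 + (cmod (g z))\<^sup>2)"
    using assms unfolding square_integrable_def by simp
  have [measurable]: "f \<in> borel_measurable M" "g \<in> borel_measurable M"
    using assms unfolding square_integrable_def by auto
  show "(\<lambda>z. f z * cnj (g z)) \<in> borel_measurable M"
    using borel_measurable_continuous_onI[OF continuous_on_cnj[OF continuous_on_id]] by measurable
  have "cmod x * cmod y \<le> (cmod x)\<^sup>2 + (cmod y)\<^sup>2" for x y :: complex
  proof -
    have "2 * (cmod x * cmod y) \<le> (cmod x)\<^sup>2 + (cmod y)\<^sup>2"
      using sum_squares_bound[of "cmod x" "cmod y"] by (simp add: mult.assoc)
    moreover have "0 \<le> cmod x * cmod y" by simp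
    ultimately show ?thesis by linarith
  qed
  then show "AE z in M. norm (f z * cnj (g z)) \<le> norm ((cmod (f z))\<^sup>2 + (cmod (g z))\<^sup>2)"
    by (simp add: norm_mult)
qed

lemma l2inner_Cauchy_Schwarz:
  assumes f: "square_integrable M f" and g: "square_integrable M g"
  shows "cmod (l2inner M f g) \<le> l2norm M f * l2norm M g"
proof -
  have [measurable]: "f \<in> borel_measurable M" "g \<in> borel_measurable M"
    using assms unfolding square_integrable_def by auto
  define I where "I = integral\<^sup>L M (\<lambda>z. cmod (f z) * cmod (g z))"
  have int_fg: "integrable M (\<lambda>z. cmod (f z) * cmod (g z))"
    using integrable_norm[OF square_integrable_integrable_mult_cnj[OF f g]] by (simp add: norm_mult)
  have nn_sq: "(\<integral>\<^sup>+z. ennreal (cmod (h z)) ^ 2 \<partial>M) = ennreal (l2norm_sq M h)"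
    if "square_integrable M h" for h
    using that unfolding square_integrable_def l2norm_sq_def
    by (subst nn_integral_eq_integral[symmetric]) (auto simp: ennreal_power)
  have "ennreal I ^ 2 = (\<integral>\<^sup>+z. ennreal (cmod (f z)) * ennreal (cmod (g z)) \<partial>M) ^ 2"
    unfolding I_def using int_fg by (simp add: nn_integral_eq_integral ennreal_mult[symmetric])
  also have "\<dots> \<le> (\<integral>\<^sup>+z. ennreal (cmod (f z)) ^ 2 \<partial>M) * (\<integral>\<^sup>+z. ennreal (cmod (g z)) ^ 2 \<partial>M)"
    by (rule Cauchy_Schwarz_nn_integral) measurable
  also have "\<dots> = ennreal (l2norm_sq M f * l2norm_sq M g)"
    by (simp add: nn_sq[OF f] nn_sq[OF g] ennreal_mult l2norm_sq_nonneg)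
  finally have "ennreal I ^ 2 \<le> ennreal (l2norm_sq M f * l2norm_sq M g)" .
  moreover have "0 \<le> I" unfolding I_def by simp
  ultimately have "I\<^sup>2 \<le> l2norm_sq M f * l2norm_sq M g"
    by (simp add: ennreal_power ennreal_le_iff l2norm_sq_nonneg)
  then have "I \<le> l2norm M f * l2norm M g"
    by (simp add: l2norm_eq_sqrt real_le_rsqrt real_sqrt_mult[symmetric])
  moreover have "cmod (l2inner M f g) \<le> I"
    unfolding l2inner_def I_def
    using integral_norm_bound[of M "\<lambda>z. f z * cnj (g z)"] by (simp add: norm_mult)
  ultimately show ?thesis by linarith
qed

lemma l2inner_cnj: "l2inner M g f = cnj (l2inner M f g)"
  unfolding l2inner_def Bochner_Integration.integral_cnj[symmetric] by (simp add: mult.commute)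

lemma l2inner_scale_left: "l2inner M (\<lambda>z. c * f z) g = c * l2inner M f g"
  unfolding l2inner_def by (simp add: mult.assoc)

lemma l2inner_scale_right: "l2inner M f (\<lambda>z. c * g z) = cnj c * l2inner M f g"
  unfolding l2inner_def by (simp add: mult.assoc mult.left_commute)

lemma l2inner_add_left:
  assumes "square_integrable M f" and "square_integrable M g" and "square_integrable M h"
  shows "l2inner M (\<lambda>z. f z + g z) h = l2inner M f h + l2inner M g h"
  unfolding l2inner_def
  using assms by (simp add: distrib_right square_integrable_integrable_mult_cnj)

lemma l2inner_diff_left:
  assumes "square_integrable M f" and "square_integrable M g" and "square_integrable M h"
  shows "l2inner M (\<lambda>z. f z - g z) h = l2inner M f h - l2inner M g h"
  unfolding l2inner_def
  using assms by (simp add: left_diff_distrib square_integrable_integrable_mult_cnj)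

lemma l2inner_sum_left:
  assumes "finite F" and "\<And>p. p \<in> F \<Longrightarrow> square_integrable M (G p)" and "square_integrable M h"
  shows "l2inner M (\<lambda>z. \<Sum>p\<in>F. c p * G p z) h = (\<Sum>p\<in>F. c p * l2inner M (G p) h)"
  using assms
proof (induction F rule: finite_induct)
  case empty then show ?case by (simp add: l2inner_def)
next
  case (insert x F)
  then show ?case
    by (simp add: l2inner_add_left square_integrable_scale square_integrable_sum l2inner_scale_left)
qed

lemma l2norm_sq_add:
  assumes f: "square_integrable M f" and g: "square_integrable M g"
  shows "l2norm_sq M (\<lambda>z. f z + g z) = l2norm_sq M f + 2 * Re (l2inner M f g) + l2norm_sq M g"
proof -
  have int_f: "integrable M (\<lambda>z. (cmod (f z))\<^sup>2)" and int_g: "integrable M (\<lambda>z. (cmod (g z))\<^sup>2)"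
    using f g unfolding square_integrable_def by auto
  have int_fg: "integrable M (\<lambda>z. 2 * Re (f z * cnj (g z)))"
    using f g by (intro integrable_mult_right integrable_Re square_integrable_integrable_mult_cnj)
  have "(\<lambda>z. (cmod (f z + g z))\<^sup>2) = (\<lambda>z. ((cmod (f z))\<^sup>2 + 2 * Re (f z * cnj (g z))) + (cmod (g z))\<^sup>2)"
    unfolding cmod_power2 by (simp add: algebra_simps power2_eq_square)
  then have "l2norm_sq M (\<lambda>z. f z + g z)
      = (LINT z|M. (cmod (f z))\<^sup>2 + 2 * Re (f z * cnj (g z))) + l2norm_sq M g"
    unfolding l2norm_sq_def using int_f int_g int_fg by simp
  also have "\<dots> = l2norm_sq M f + 2 * (LINT z|M. Re (f z * cnj (g z))) + l2norm_sq M g"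
    unfolding l2norm_sq_def
    by (simp only: Bochner_Integration.integral_add[OF int_f int_fg] integral_mult_right_zero)
  also have "(LINT z|M. Re (f z * cnj (g z))) = Re (l2inner M f g)"
    unfolding l2inner_def by (rule integral_Re[OF square_integrable_integrable_mult_cnj[OF f g]])
  finally show ?thesis .
qed

lemma l2norm_sq_diff_scale:
  assumes "square_integrable M f" and "square_integrable M g"
  shows "l2norm_sq M (\<lambda>z. f z - t * g z)
    = l2norm_sq M f - 2 * Re (cnj t * l2inner M f g) + (cmod t)\<^sup>2 * l2norm_sq M g"
proof -
  have "l2norm_sq M (\<lambda>z. f z + (- t) * g z)
      = l2norm_sq M f + 2 * Re (cnj (- t) * l2inner M f g) + (cmod (- t))\<^sup>2 * l2norm_sq M g"
    using l2norm_sq_add[OF assms(1) square_integrable_scale[OF assms(2), of "- t"]]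
    by (simp only: l2inner_scale_right l2norm_sq_scale)
  then show ?thesis by simp
qed

lemma l2norm_sq_parallelogram:
  assumes "square_integrable M f" and "square_integrable M g"
  shows "l2norm_sq M (\<lambda>z. f z + g z) + l2norm_sq M (\<lambda>z. f z - g z)
    = 2 * l2norm_sq M f + 2 * l2norm_sq M g"
  using l2norm_sq_add[OF assms] l2norm_sq_diff_scale[OF assms, of 1] by simp

lemma l2norm_triangle:
  assumes "square_integrable M f" and "square_integrable M g"
  shows "l2norm M (\<lambda>z. f z + g z) \<le> l2norm M f + l2norm M g"
proof -
  have "Re (l2inner M f g) \<le> l2norm M f * l2norm M g"
    using complex_Re_le_cmod l2inner_Cauchy_Schwarz[OF assms] by (rule order_trans)
  then have "l2norm_sq M (\<lambda>z. f z + g z) \<le> (l2norm M f + l2norm M g)\<^sup>2"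
    unfolding l2norm_sq_add[OF assms] by (simp add: power2_sum l2norm_power2)
  then show ?thesis
    unfolding l2norm_eq_sqrt[of M "\<lambda>z. f z + g z"]
    by (rule real_le_lsqrt[rotated]) (simp add: l2norm_nonneg)
qed

lemma l2norm_diff_triangle:
  assumes "square_integrable M f" and "square_integrable M g" and "square_integrable M h"
  shows "l2norm M (\<lambda>z. f z - h z) \<le> l2norm M (\<lambda>z. f z - g z) + l2norm M (\<lambda>z. g z - h z)"
  using l2norm_triangle[OF square_integrable_diff[OF assms(1,2)] square_integrable_diff[OF assms(2,3)]]
  by simp

lemma l2inner_eq_0_if_minimal:
  assumes u: "square_integrable M u" and k: "square_integrable M k"
    and min: "\<And>t. l2norm_sq M u \<le> l2norm_sq M (\<lambda>z. u z - t * k z)"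
  shows "l2inner M u k = 0"
proof -
  define c where "c = l2inner M u k"
  define s where "s = 1 / (l2norm_sq M k + 1)"
  have s_pos: "s > 0" and s_small: "s * l2norm_sq M k < 1"
    unfolding s_def using l2norm_sq_nonneg[of M k] by (auto simp: field_simps)
  have "0 \<le> - 2 * Re (cnj (s * c) * c) + (cmod (s * c))\<^sup>2 * l2norm_sq M k"
    using min[of "s * c"] unfolding l2norm_sq_diff_scale[OF u k] c_def by simp
  also have "Re (cnj (s * c) * c) = s * (cmod c)\<^sup>2"
    unfolding cmod_power2 by (simp add: power2_eq_square algebra_simps)
  also have "(cmod (s * c))\<^sup>2 = s\<^sup>2 * (cmod c)\<^sup>2"
    using s_pos by (simp add: norm_mult power_mult_distrib)
  finally have "0 \<le> s * (cmod c)\<^sup>2 * (s * l2norm_sq M k - 2)"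
    by (simp add: algebra_simps power2_eq_square)
  moreover have "s * l2norm_sq M k - 2 < 0" using s_small by simp
  ultimately have "s * (cmod c)\<^sup>2 \<le> 0" by (simp add: zero_le_mult_iff)
  then have "(cmod c)\<^sup>2 \<le> 0" using s_pos by (simp add: mult_le_0_iff)
  then show ?thesis unfolding c_def by simp
qed

definition l2_cauchy :: "'a measure \<Rightarrow> (nat \<Rightarrow> 'a \<Rightarrow> complex) \<Rightarrow> bool" where
  "l2_cauchy M s \<longleftrightarrow> (\<forall>e>0. \<exists>N. \<forall>m\<ge>N. \<forall>n\<ge>N. l2norm M (\<lambda>z. s m z - s n z) < e)"

definition l2_tendsto :: "'a measure \<Rightarrow> (nat \<Rightarrow> 'a \<Rightarrow> complex) \<Rightarrow> ('a \<Rightarrow> complex) \<Rightarrow> bool" where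
  "l2_tendsto M s f \<longleftrightarrow> (\<lambda>n. l2norm M (\<lambda>z. s n z - f z)) \<longlonglongrightarrow> 0"

lemma l2_tendsto_l2inner:
  assumes "\<And>n. square_integrable M (s n)" and "square_integrable M f" and "square_integrable M h"
    and "l2_tendsto M s f"
  shows "(\<lambda>n. l2inner M (s n) h) \<longlonglongrightarrow> l2inner M f h"
proof (rule LIM_zero_cancel, rule Lim_null_comparison)
  have "norm (l2inner M (s n) h - l2inner M f h) \<le> l2norm M (\<lambda>z. s n z - f z) * l2norm M h" for n
    using l2inner_Cauchy_Schwarz[OF square_integrable_diff[OF assms(1,2)] assms(3)]
    by (simp add: l2inner_diff_left assms)
  then show "\<forall>\<^sub>F n in sequentially.
      norm (l2inner M (s n) h - l2inner M f h) \<le> l2norm M (\<lambda>z. s n z - f z) * l2norm M h"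
    by simp
  show "(\<lambda>n. l2norm M (\<lambda>z. s n z - f z) * l2norm M h) \<longlonglongrightarrow> 0"
    using assms(4) unfolding l2_tendsto_def by (rule tendsto_mult_left_zero)
qed

lemma l2_tendsto_l2norm:
  assumes "\<And>n. square_integrable M (s n)" and "square_integrable M f" and "l2_tendsto M s f"
  shows "(\<lambda>n. l2norm M (s n)) \<longlonglongrightarrow> l2norm M f"
proof (rule LIM_zero_cancel, rule Lim_null_comparison)
  have "\<bar>l2norm M (s n) - l2norm M f\<bar> \<le> l2norm M (\<lambda>z. s n z - f z)" for n
  proof -
    have "l2norm M (s n) \<le> l2norm M (\<lambda>z. s n z - f z) + l2norm M f"
      using l2norm_diff_triangle[OF assms(1) assms(2) square_integrable_zero, of n] by simp
    moreover have "l2norm M f \<le> l2norm M (\<lambda>z. f z - s n z) + l2norm M (s n)"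
      using l2norm_diff_triangle[OF assms(2) assms(1) square_integrable_zero, of n] by simp
    ultimately show ?thesis
      unfolding l2norm_minus_commute[of M f "s n"] abs_le_iff by linarith
  qed
  then show "\<forall>\<^sub>F n in sequentially. norm (l2norm M (s n) - l2norm M f) \<le> l2norm M (\<lambda>z. s n z - f z)"
    by simp
  show "(\<lambda>n. l2norm M (\<lambda>z. s n z - f z)) \<longlonglongrightarrow> 0"
    using assms(3) unfolding l2_tendsto_def .
qed

lemma l2_tendsto_imp_l2_cauchy:
  assumes s: "\<And>n. square_integrable M (s n)" and f: "square_integrable M f"
    and lim: "l2_tendsto M s f"
  shows "l2_cauchy M s"
  unfolding l2_cauchy_def
proof (intro allI impI)
  fix e :: real assume "e > 0"
  then have "\<forall>\<^sub>F n in sequentially. l2norm M (\<lambda>z. s n z - f z) < e / 2"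
    using lim unfolding l2_tendsto_def by (intro order_tendstoD) auto
  then obtain N where N: "\<And>n. n \<ge> N \<Longrightarrow> l2norm M (\<lambda>z. s n z - f z) < e / 2"
    unfolding eventually_sequentially by blast
  have "l2norm M (\<lambda>z. s m z - s n z) < e" if "m \<ge> N" "n \<ge> N" for m n
  proof -
    have "l2norm M (\<lambda>z. s m z - s n z) \<le> l2norm M (\<lambda>z. s m z - f z) + l2norm M (\<lambda>z. s n z - f z)"
      using l2norm_diff_triangle[OF s f s, of m n] unfolding l2norm_minus_commute[of M f "s n"] .
    then show ?thesis using N[OF \<open>m \<ge> N\<close>] N[OF \<open>n \<ge> N\<close>] by linarith
  qed
  then show "\<exists>N. \<forall>m\<ge>N. \<forall>n\<ge>N. l2norm M (\<lambda>z. s m z - s n z) < e" by blast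
qed

lemma l2_cauchy_if_l2norm_sq_bound:
  assumes bound: "\<And>m n. l2norm_sq M (\<lambda>z. s m z - s n z) \<le> e m + e n" and e: "e \<longlonglongrightarrow> 0"
  shows "l2_cauchy M s"
  unfolding l2_cauchy_def
proof (intro allI impI)
  fix r :: real assume "r > 0"
  then have "r\<^sup>2 / 2 > 0" by simp
  with e have "\<forall>\<^sub>F n in sequentially. e n < r\<^sup>2 / 2"
    by (intro order_tendstoD) auto
  then obtain N where N: "\<And>n. n \<ge> N \<Longrightarrow> e n < r\<^sup>2 / 2"
    unfolding eventually_sequentially by blast
  have "l2norm M (\<lambda>z. s m z - s n z) < r" if "m \<ge> N" "n \<ge> N" for m n
  proof -
    have "(l2norm M (\<lambda>z. s m z - s n z))\<^sup>2 < r\<^sup>2"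
      using bound[of m n] N[OF \<open>m \<ge> N\<close>] N[OF \<open>n \<ge> N\<close>] by (simp add: l2norm_power2)
    then show ?thesis using \<open>r > 0\<close> by (simp add: power_less_imp_less_base)
  qed
  then show "\<exists>N. \<forall>m\<ge>N. \<forall>n\<ge>N. l2norm M (\<lambda>z. s m z - s n z) < r" by blast
qed

lemma l2_cauchy_if_lipschitz:
  assumes "l2_cauchy M s" and C: "C \<ge> 0"
    and lip: "\<And>m n. l2norm M (\<lambda>z. t m z - t n z) \<le> C * l2norm M (\<lambda>z. s m z - s n z)"
  shows "l2_cauchy M t"
  unfolding l2_cauchy_def
proof (intro allI impI)
  fix e :: real assume "e > 0"
  then have "e / (C + 1) > 0" using C by simp
  with assms(1) obtain N where N: "\<And>m n. m \<ge> N \<Longrightarrow> n \<ge> N \<Longrightarrow> l2norm M (\<lambda>z. s m z - s n z) < e / (C + 1)"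
    unfolding l2_cauchy_def by blast
  have "l2norm M (\<lambda>z. t m z - t n z) < e" if "m \<ge> N" "n \<ge> N" for m n
  proof -
    have "C * l2norm M (\<lambda>z. s m z - s n z) \<le> C * (e / (C + 1))"
      using N[OF that] C by (intro mult_left_mono) auto
    also have "\<dots> < e" using \<open>e > 0\<close> C by (simp add: field_simps)
    finally show ?thesis using lip[of m n] by linarith
  qed
  then show "\<exists>N. \<forall>m\<ge>N. \<forall>n\<ge>N. l2norm M (\<lambda>z. t m z - t n z) < e" by blast
qed

lemma l2_tendsto_l2norm_sq:
  assumes "\<And>n. square_integrable M (s n)" and "square_integrable M f" and "l2_tendsto M s f"
  shows "(\<lambda>n. l2norm_sq M (s n)) \<longlonglongrightarrow> l2norm_sq M f"
  using tendsto_power[OF l2_tendsto_l2norm[OF assms], of 2] by (simp add: l2norm_power2)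

lemma l2_tendsto_l2norm_sq_diff:
  assumes "\<And>n. square_integrable M (s n)" and "square_integrable M f" and "square_integrable M h"
    and "l2_tendsto M s f"
  shows "(\<lambda>n. l2norm_sq M (\<lambda>z. h z - s n z)) \<longlonglongrightarrow> l2norm_sq M (\<lambda>z. h z - f z)"
proof (rule l2_tendsto_l2norm_sq)
  show "l2_tendsto M (\<lambda>n z. h z - s n z) (\<lambda>z. h z - f z)"
    using assms(4) unfolding l2_tendsto_def by (simp add: l2norm_minus_commute[of M "s _"])
qed (use assms in \<open>auto intro: square_integrable_diff\<close>)

lemma l2_cauchy_minimizing_sequence:
  assumes midpoint: "\<And>d e. d \<in> C \<Longrightarrow> e \<in> C \<Longrightarrow> (\<lambda>z. (d z + e z) / 2) \<in> C"
    and C: "\<And>d. d \<in> C \<Longrightarrow> square_integrable M d" and f: "square_integrable M f"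
    and lower: "\<And>d. d \<in> C \<Longrightarrow> \<eta> \<le> l2norm_sq M (\<lambda>z. f z - d z)"
    and d: "\<And>n. d n \<in> C" and d_min: "\<And>n. l2norm_sq M (\<lambda>z. f z - d n z) \<le> \<eta> + \<epsilon> n"
    and \<epsilon>: "\<epsilon> \<longlonglongrightarrow> 0"
  shows "l2_cauchy M d"
proof (rule l2_cauchy_if_l2norm_sq_bound)
  show "(\<lambda>n. 2 * \<epsilon> n) \<longlonglongrightarrow> 0" using tendsto_mult_right_zero[OF \<epsilon>] .
  fix m n
  define a where "a z = f z - d n z" for z
  define b where "b z = f z - d m z" for z
  have a: "square_integrable M a" and b: "square_integrable M b"
    unfolding a_def b_def using f C[OF d] by (auto intro: square_integrable_diff)
  have "4 * \<eta> \<le> 4 * l2norm_sq M (\<lambda>z. f z - (d m z + d n z) / 2)"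
    using lower[OF midpoint[OF d d]] by simp
  also have "\<dots> = l2norm_sq M (\<lambda>z. 2 * (f z - (d m z + d n z) / 2))"
    unfolding l2norm_sq_scale by simp
  also have "(\<lambda>z. 2 * (f z - (d m z + d n z) / 2)) = (\<lambda>z. a z + b z)"
    unfolding a_def b_def by (simp add: fun_eq_iff right_diff_distrib add_divide_distrib)
  finally have "l2norm_sq M (\<lambda>z. d m z - d n z) \<le> 2 * l2norm_sq M a + 2 * l2norm_sq M b - 4 * \<eta>"
    using l2norm_sq_parallelogram[OF a b] by (simp add: a_def b_def)
  then show "l2norm_sq M (\<lambda>z. d m z - d n z) \<le> 2 * \<epsilon> m + 2 * \<epsilon> n"
    using d_min[of m] d_min[of n] unfolding a_def b_def by linarith
qed

section \<open>Reproducing kernel Hilbert spaces of square-integrable functions\<close>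

lemma kernel_in_span: "K p \<in> kernel_span K"
  unfolding kernel_span_def by (intro CollectI exI[of _ "{p}"] exI[of _ "\<lambda>_. 1"]) auto

lemma zero_in_kernel_span: "(\<lambda>z. 0) \<in> kernel_span K"
  unfolding kernel_span_def by (intro CollectI exI[of _ "{}"]) auto

lemma kernel_span_scale: "d \<in> kernel_span K \<Longrightarrow> (\<lambda>z. a * d z) \<in> kernel_span K"
  unfolding kernel_span_def
  by (auto simp: sum_distrib_left mult.assoc intro!: exI[of _ "\<lambda>p. a * _ p"])

lemma kernel_span_add:
  assumes "d \<in> kernel_span K" and "e \<in> kernel_span K"
  shows "(\<lambda>z. d z + e z) \<in> kernel_span K"
proof -
  obtain F c G c' where F: "finite F" "d = (\<lambda>z. \<Sum>p\<in>F. c p * K p z)"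
    and G: "finite G" "e = (\<lambda>z. \<Sum>p\<in>G. c' p * K p z)"
    using assms unfolding kernel_span_def by blast
  define c'' where "c'' p = (if p \<in> F then c p else 0) + (if p \<in> G then c' p else 0)" for p
  have restrict: "(\<Sum>p\<in>F \<union> G. (if p \<in> A then b p else 0) * K p z) = (\<Sum>p\<in>A. b p * K p z)"
    if "A \<subseteq> F \<union> G" for A b z
    by (rule sum.mono_neutral_cong_right) (use F(1) G(1) that in auto)
  have "(\<Sum>p\<in>F \<union> G. c'' p * K p z) = (\<Sum>p\<in>F. c p * K p z) + (\<Sum>p\<in>G. c' p * K p z)" for z
    by (simp add: c''_def distrib_right sum.distrib restrict)
  then show ?thesis
    unfolding kernel_span_def using F G by (auto intro!: exI[of _ "F \<union> G"] exI[of _ c''])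
qed

lemma kernel_span_diff:
  assumes "d \<in> kernel_span K" and "e \<in> kernel_span K"
  shows "(\<lambda>z. d z - e z) \<in> kernel_span K"
  using kernel_span_add[OF assms(1) kernel_span_scale[OF assms(2), of "-1"]] by simp

definition inner_operator :: "'a measure \<Rightarrow> ('a \<Rightarrow> 'a \<Rightarrow> complex) \<Rightarrow> ('a \<Rightarrow> complex) \<Rightarrow> 'a \<Rightarrow> complex" where
  "inner_operator M h f = (\<lambda>z. l2inner M f (h z))"

locale l2_rkhs =
  fixes M :: "'a measure" and H :: "('a \<Rightarrow> complex) set" and K :: "'a \<Rightarrow> 'a \<Rightarrow> complex"
  assumes rkhs: "rkhs_L2 M H K"
begin

lemma square_integrable_if_in_H: "f \<in> H \<Longrightarrow> square_integrable M f"
  using rkhs unfolding rkhs_L2_def square_integrable_def by auto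

lemma add_in_H: "f \<in> H \<Longrightarrow> g \<in> H \<Longrightarrow> (\<lambda>z. f z + g z) \<in> H"
  using rkhs unfolding rkhs_L2_def by auto

lemma scale_in_H: "f \<in> H \<Longrightarrow> (\<lambda>z. c * f z) \<in> H"
  using rkhs unfolding rkhs_L2_def by auto

lemma diff_in_H: "f \<in> H \<Longrightarrow> g \<in> H \<Longrightarrow> (\<lambda>z. f z - g z) \<in> H"
  using add_in_H[of f "\<lambda>z. (-1) * g z"] scale_in_H[of g "-1"] by simp

lemma kernel_in_H: "K z \<in> H"
  using rkhs unfolding rkhs_L2_def by auto

lemma reproducing: "f \<in> H \<Longrightarrow> f z = l2inner M f (K z)"
  using rkhs unfolding rkhs_L2_def by auto

lemma H_complete:
  assumes "\<And>n. s n \<in> H" and "l2_cauchy M s"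
  obtains f where "f \<in> H" and "l2_tendsto M s f"
  using rkhs assms unfolding rkhs_L2_def l2_cauchy_def l2_tendsto_def by blast

lemma sum_in_H:
  assumes "finite F" and "\<And>p. p \<in> F \<Longrightarrow> G p \<in> H"
  shows "(\<lambda>z. \<Sum>p\<in>F. c p * G p z) \<in> H"
  using assms
proof (induction F rule: finite_induct)
  case empty then show ?case using rkhs unfolding rkhs_L2_def by simp
next
  case (insert p F)
  then show ?case using add_in_H[OF scale_in_H] by simp
qed

lemma kernel_span_subset_H: "kernel_span K \<subseteq> H"
  unfolding kernel_span_def using sum_in_H kernel_in_H by blast

lemma eq_0_if_l2norm_eq_0:
  assumes f: "f \<in> H" and "l2norm M f = 0"
  shows "f z = 0"
proof -
  have "cmod (f z) \<le> l2norm M f * l2norm M (K z)"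
    using l2inner_Cauchy_Schwarz[OF square_integrable_if_in_H[OF f] square_integrable_if_in_H[OF kernel_in_H]]
    by (simp add: reproducing[OF f, symmetric])
  then show ?thesis using \<open>l2norm M f = 0\<close> by simp
qed

lemma l2_tendsto_imp_pointwise:
  assumes s: "\<And>n. s n \<in> H" and f: "f \<in> H" and lim: "l2_tendsto M s f"
  shows "(\<lambda>n. s n z) \<longlonglongrightarrow> f z"
  using l2_tendsto_l2inner[OF square_integrable_if_in_H[OF s] square_integrable_if_in_H[OF f]
      square_integrable_if_in_H[OF kernel_in_H] lim]
  by (simp add: reproducing[OF s, symmetric] reproducing[OF f, symmetric])

lemma l2_cauchy_pointwise_limit:
  assumes s: "\<And>n. s n \<in> H" and "l2_cauchy M s" and pointwise: "\<And>z. (\<lambda>n. s n z) \<longlonglongrightarrow> f z"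
  shows "f \<in> H" and "l2_tendsto M s f"
proof -
  obtain g where g: "g \<in> H" and lim: "l2_tendsto M s g"
    using H_complete[OF s \<open>l2_cauchy M s\<close>] .
  have "f = g"
    using LIMSEQ_unique[OF pointwise l2_tendsto_imp_pointwise[OF s g lim]] by (rule ext)
  then show "f \<in> H" and "l2_tendsto M s f" using g lim by simp_all
qed

lemma eq_if_kernel_minimal:
  assumes f: "f \<in> H" and g: "g \<in> H"
    and min: "\<And>z t. l2norm_sq M (\<lambda>w. f w - g w) \<le> l2norm_sq M (\<lambda>w. f w - g w - t * K z w)"
  shows "f = g"
proof
  fix z
  have "l2inner M (\<lambda>w. f w - g w) (K z) = 0"
    using square_integrable_if_in_H[OF diff_in_H[OF f g]] square_integrable_if_in_H[OF kernel_in_H] min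
    by (rule l2inner_eq_0_if_minimal)
  then show "f z = g z" using reproducing[OF diff_in_H[OF f g], of z] by simp
qed

lemma kernel_span_minimizing_sequence:
  assumes f: "f \<in> H"
  obtains \<eta> d g where "\<And>e. e \<in> kernel_span K \<Longrightarrow> \<eta> \<le> l2norm_sq M (\<lambda>z. f z - e z)"
    and "\<And>n. d n \<in> kernel_span K" and "g \<in> H" and "l2_tendsto M d g"
    and "l2norm_sq M (\<lambda>z. f z - g z) \<le> \<eta>"
proof -
  have sq_f: "square_integrable M f" by (rule square_integrable_if_in_H[OF f])
  have sq_span: "square_integrable M d" if "d \<in> kernel_span K" for d
    using that kernel_span_subset_H square_integrable_if_in_H by blast
  define \<eta> where "\<eta> = (INF d\<in>kernel_span K. l2norm_sq M (\<lambda>z. f z - d z))"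
  have bdd: "bdd_below ((\<lambda>d. l2norm_sq M (\<lambda>z. f z - d z)) ` kernel_span K)"
    using l2norm_sq_nonneg by (intro bdd_belowI2)
  have lower: "\<eta> \<le> l2norm_sq M (\<lambda>z. f z - d z)" if "d \<in> kernel_span K" for d
    unfolding \<eta>_def using bdd that by (rule cINF_lower)
  have "\<exists>d\<in>kernel_span K. l2norm_sq M (\<lambda>z. f z - d z) < \<eta> + inverse (real (Suc n))" for n
    using cINF_less_iff[OF _ bdd, of "\<eta> + inverse (real (Suc n))"] zero_in_kernel_span
    by (auto simp: \<eta>_def[symmetric])
  then obtain d where d: "\<And>n. d n \<in> kernel_span K"
    and d_min: "\<And>n. l2norm_sq M (\<lambda>z. f z - d n z) \<le> \<eta> + inverse (real (Suc n))"
    by (metis less_imp_le)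
  have "l2_cauchy M d"
  proof (rule l2_cauchy_minimizing_sequence[OF _ sq_span sq_f lower d d_min])
    show "(\<lambda>z. (d z + e z) / 2) \<in> kernel_span K" if "d \<in> kernel_span K" "e \<in> kernel_span K" for d e
      using kernel_span_scale[OF kernel_span_add[OF that], of "1/2"] by simp
  qed (assumption | rule LIMSEQ_inverse_real_of_nat)+
  then obtain g where g: "g \<in> H" and lim: "l2_tendsto M d g"
    using H_complete kernel_span_subset_H d by blast
  have "l2norm_sq M (\<lambda>z. f z - g z) \<le> \<eta>"
  proof (rule LIMSEQ_le)
    show "(\<lambda>n. l2norm_sq M (\<lambda>z. f z - d n z)) \<longlonglongrightarrow> l2norm_sq M (\<lambda>z. f z - g z)"
      using sq_span[OF d] square_integrable_if_in_H[OF g] sq_f lim by (rule l2_tendsto_l2norm_sq_diff)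
    show "(\<lambda>n. \<eta> + inverse (real (Suc n))) \<longlonglongrightarrow> \<eta>"
      using tendsto_add[OF tendsto_const LIMSEQ_inverse_real_of_nat] by simp
  qed (use d_min in blast)
  with that lower d g lim show thesis by blast
qed

text \<open>The limit \<open>g\<close> of a minimising sequence is a best approximation of \<open>f\<close> from the closure
  of the kernel span, so \<open>f - g\<close> is orthogonal to every kernel.\<close>
lemma kernel_span_dense:
  assumes f: "f \<in> H"
  obtains d where "\<And>n. d n \<in> kernel_span K" and "l2_tendsto M d f"
proof -
  obtain \<eta> d g where lower: "\<And>e. e \<in> kernel_span K \<Longrightarrow> \<eta> \<le> l2norm_sq M (\<lambda>z. f z - e z)"
    and d: "\<And>n. d n \<in> kernel_span K" and g: "g \<in> H" and lim: "l2_tendsto M d g"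
    and g_min: "l2norm_sq M (\<lambda>z. f z - g z) \<le> \<eta>"
    using kernel_span_minimizing_sequence[OF f] by blast
  have "\<eta> \<le> l2norm_sq M (\<lambda>w. f w - g w - t * K z w)" for z t
  proof (rule LIMSEQ_le_const)
    have sq_h: "square_integrable M (\<lambda>w. f w - t * K z w)"
      using f kernel_in_H by (intro square_integrable_diff square_integrable_scale square_integrable_if_in_H)
    have "(\<lambda>n. l2norm_sq M (\<lambda>w. (f w - t * K z w) - d n w))
        \<longlonglongrightarrow> l2norm_sq M (\<lambda>w. (f w - t * K z w) - g w)"
      by (rule l2_tendsto_l2norm_sq_diff[OF _ square_integrable_if_in_H[OF g] sq_h lim])
        (use d kernel_span_subset_H square_integrable_if_in_H in blast)
    moreover have "(\<lambda>w. (f w - t * K z w) - g w) = (\<lambda>w. f w - g w - t * K z w)"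
      by (simp add: fun_eq_iff)
    ultimately show "(\<lambda>n. l2norm_sq M (\<lambda>w. (f w - t * K z w) - d n w))
        \<longlonglongrightarrow> l2norm_sq M (\<lambda>w. f w - g w - t * K z w)"
      by simp
    show "\<exists>N. \<forall>n\<ge>N. \<eta> \<le> l2norm_sq M (\<lambda>w. (f w - t * K z w) - d n w)"
      using lower[OF kernel_span_add[OF d kernel_span_scale[OF kernel_in_span]]]
      by (simp add: algebra_simps)
  qed
  then have "f = g" using g_min by (intro eq_if_kernel_minimal[OF f g]) (rule order_trans)
  with d lim that show thesis by blast
qed

lemma inner_operator_bound_on_kernel_span:
  assumes bdd: "bdd_above {l2norm M (inner_operator M h f) | f. f \<in> kernel_span K \<and> l2norm M f = 1}"
  obtains C where "C \<ge> 0"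
    and "\<And>d. d \<in> kernel_span K \<Longrightarrow> l2norm M (inner_operator M h d) \<le> C * l2norm M d"
proof -
  obtain C0 where C0: "\<And>f. f \<in> kernel_span K \<Longrightarrow> l2norm M f = 1 \<Longrightarrow> l2norm M (inner_operator M h f) \<le> C0"
    using bdd unfolding bdd_above_def by blast
  have "l2norm M (inner_operator M h d) \<le> max C0 0 * l2norm M d" if d: "d \<in> kernel_span K" for d
  proof (cases "l2norm M d = 0")
    case True
    then have "d = (\<lambda>z. 0)" using eq_0_if_l2norm_eq_0 kernel_span_subset_H d by blast
    then show ?thesis by (simp add: inner_operator_def l2inner_def l2norm_zero)
  next
    case False
    then have pos: "l2norm M d > 0" using l2norm_nonneg[of M d] by simp
    define u where "u z = complex_of_real (1 / l2norm M d) * d z" for z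
    have "l2norm M u = 1" unfolding u_def l2norm_scale using pos by (simp add: norm_divide)
    then have "l2norm M (inner_operator M h u) \<le> C0"
      using C0 kernel_span_scale[OF d] unfolding u_def by blast
    moreover have "l2norm M (inner_operator M h u) = l2norm M (inner_operator M h d) / l2norm M d"
      using pos unfolding u_def inner_operator_def l2inner_scale_left l2norm_scale
      by (simp add: norm_divide)
    ultimately have "l2norm M (inner_operator M h d) \<le> C0 * l2norm M d"
      using pos by (simp add: divide_le_eq)
    also have "\<dots> \<le> max C0 0 * l2norm M d" using pos by (intro mult_right_mono) auto
    finally show ?thesis .
  qed
  then show thesis by (intro that[of "max C0 0"]) auto
qed

lemma inner_operator_kernel_span_in_H:
  assumes h: "\<And>z. h z \<in> H" and kernels: "\<And>p. (\<lambda>z. cnj (h z p)) \<in> H"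
    and d: "d \<in> kernel_span K"
  shows "inner_operator M h d \<in> H"
proof -
  obtain F c where "finite F" and d_eq: "d = (\<lambda>z. \<Sum>p\<in>F. c p * K p z)"
    using d unfolding kernel_span_def by blast
  have "inner_operator M h (K p) = (\<lambda>z. cnj (h z p))" for p
    unfolding inner_operator_def
    by (simp add: l2inner_cnj[of M "K p"] reproducing[OF h, symmetric])
  then have "inner_operator M h d = (\<lambda>z. \<Sum>p\<in>F. c p * cnj (h z p))"
    unfolding d_eq inner_operator_def
    using l2inner_sum_left[OF \<open>finite F\<close> square_integrable_if_in_H[OF kernel_in_H]
        square_integrable_if_in_H[OF h]]
    by (simp add: fun_eq_iff)
  also have "\<dots> \<in> H" using \<open>finite F\<close> kernels by (rule sum_in_H)
  finally show ?thesis .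
qed

lemma inner_operator_extension:
  assumes h: "\<And>z. h z \<in> H" and span: "\<And>d. d \<in> kernel_span K \<Longrightarrow> inner_operator M h d \<in> H"
    and "C \<ge> 0"
    and bound: "\<And>d. d \<in> kernel_span K \<Longrightarrow> l2norm M (inner_operator M h d) \<le> C * l2norm M d"
    and f: "f \<in> H"
  shows "inner_operator M h f \<in> H" and "l2norm M (inner_operator M h f) \<le> C * l2norm M f"
proof -
  let ?T = "inner_operator M h"
  obtain d where d: "\<And>n. d n \<in> kernel_span K" and lim: "l2_tendsto M d f"
    using kernel_span_dense[OF f] by blast
  have sq_d: "square_integrable M (d n)" for n
    using d kernel_span_subset_H square_integrable_if_in_H by blast
  have sq_f: "square_integrable M f" by (rule square_integrable_if_in_H[OF f])
  have cauchy: "l2_cauchy M (\<lambda>n. ?T (d n))"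
  proof (rule l2_cauchy_if_lipschitz[OF l2_tendsto_imp_l2_cauchy[OF sq_d sq_f lim] \<open>C \<ge> 0\<close>])
    fix m n
    have "(\<lambda>z. ?T (d m) z - ?T (d n) z) = ?T (\<lambda>z. d m z - d n z)"
      unfolding inner_operator_def
      by (simp add: l2inner_diff_left sq_d square_integrable_if_in_H[OF h])
    then show "l2norm M (\<lambda>z. ?T (d m) z - ?T (d n) z) \<le> C * l2norm M (\<lambda>z. d m z - d n z)"
      using bound[OF kernel_span_diff[OF d d]] by simp
  qed
  have pointwise: "(\<lambda>n. ?T (d n) z) \<longlonglongrightarrow> ?T f z" for z
    unfolding inner_operator_def
    by (rule l2_tendsto_l2inner[OF sq_d sq_f square_integrable_if_in_H[OF h] lim])
  note Tf = l2_cauchy_pointwise_limit(1)[OF span[OF d] cauchy pointwise]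
    and T_lim = l2_cauchy_pointwise_limit(2)[OF span[OF d] cauchy pointwise]
  show "?T f \<in> H" by (rule Tf)
  show "l2norm M (?T f) \<le> C * l2norm M f"
  proof (rule LIMSEQ_le)
    show "(\<lambda>n. l2norm M (?T (d n))) \<longlonglongrightarrow> l2norm M (?T f)"
      using span[OF d] Tf T_lim by (intro l2_tendsto_l2norm square_integrable_if_in_H)
    show "(\<lambda>n. C * l2norm M (d n)) \<longlonglongrightarrow> C * l2norm M f"
      by (intro tendsto_mult_left l2_tendsto_l2norm[OF sq_d sq_f lim])
  qed (use bound[OF d] in blast)
qed

end

section \<open>Translation-invariant kernels\<close>

definition S_kernel :: "('g::ab_group_add \<Rightarrow> 'y \<Rightarrow> 'y \<Rightarrow> complex) \<Rightarrow> 'g \<times> 'y \<Rightarrow> 'g \<times> 'y \<Rightarrow> complex" where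
  "S_kernel psi z w = cnj (psi (fst z - fst w) (snd z) (snd w))"

locale l2_rkhs_translation = l2_rkhs M H K
  for M :: "('g::ab_group_add \<times> 'y) measure" and H K +
  assumes kernel_shift: "\<And>x y u v. K (x, y) (u, v) = K (0, y) (u - x, v)"
    and measurable_translate: "\<And>a. (\<lambda>w. (a + fst w, snd w)) \<in> measurable M M"
    and distr_translate: "\<And>a. distr M M (\<lambda>w. (a + fst w, snd w)) = M"
begin

lemma l2norm_translate:
  assumes [measurable]: "f \<in> borel_measurable M"
  shows "l2norm M (\<lambda>w. f (a + fst w, snd w)) = l2norm M f"
proof -
  have sq: "(\<lambda>z. (cmod (f z))\<^sup>2) \<in> borel_measurable M" by measurable
  show ?thesis
    using integral_distr[OF measurable_translate[of a] sq] distr_translate[of a]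
    unfolding l2norm_def by simp
qed

lemma kernel_translate: "K p (a + u, v) = K (fst p - a, snd p) (u, v)"
  using kernel_shift[of "fst p" "snd p" "a + u" v] kernel_shift[of "fst p - a" "snd p" u v]
  by (simp add: algebra_simps)

lemma kernel_span_translate:
  assumes "d \<in> kernel_span K"
  shows "(\<lambda>w. d (a + fst w, snd w)) \<in> kernel_span K"
proof -
  obtain F c where "finite F" and d: "d = (\<lambda>z. \<Sum>p\<in>F. c p * K p z)"
    using assms unfolding kernel_span_def by blast
  define shift where "shift p = (fst p - a, snd p)" for p :: "'g \<times> 'y"
  define unshift where "unshift q = (fst q + a, snd q)" for q :: "'g \<times> 'y"
  have inj: "inj_on shift F" unfolding shift_def by (rule inj_onI) (auto simp: prod_eq_iff)
  have "(\<lambda>w. d (a + fst w, snd w)) = (\<lambda>w. \<Sum>q\<in>shift ` F. c (unshift q) * K q w)"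
    unfolding d sum.reindex[OF inj] comp_def by (simp add: kernel_translate shift_def unshift_def)
  then show ?thesis
    unfolding kernel_span_def using \<open>finite F\<close> by (auto intro!: exI[of _ "shift ` F"])
qed

lemma translate_in_H:
  assumes f: "f \<in> H"
  shows "(\<lambda>w. f (a + fst w, snd w)) \<in> H"
proof -
  obtain d where d: "\<And>n. d n \<in> kernel_span K" and lim: "l2_tendsto M d f"
    using kernel_span_dense[OF f] by blast
  have d_H: "d n \<in> H" for n using d kernel_span_subset_H by blast
  have sq_d: "square_integrable M (d n)" for n by (rule square_integrable_if_in_H[OF d_H])
  show ?thesis
  proof (rule l2_cauchy_pointwise_limit)
    show "(\<lambda>w. d n (a + fst w, snd w)) \<in> H" for n
      using kernel_span_translate[OF d] kernel_span_subset_H by blast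
    show "l2_cauchy M (\<lambda>n w. d n (a + fst w, snd w))"
    proof (rule l2_cauchy_if_lipschitz[where C = 1])
      show "l2_cauchy M d"
        by (rule l2_tendsto_imp_l2_cauchy[OF sq_d square_integrable_if_in_H[OF f] lim])
      fix m n
      have "(\<lambda>z. d m z - d n z) \<in> borel_measurable M"
        using square_integrable_diff[OF sq_d sq_d] unfolding square_integrable_def by blast
      from l2norm_translate[OF this, of a]
      show "l2norm M (\<lambda>w. d m (a + fst w, snd w) - d n (a + fst w, snd w))
          \<le> 1 * l2norm M (\<lambda>z. d m z - d n z)" by simp
    qed simp
    show "(\<lambda>n. d n (a + fst w, snd w)) \<longlonglongrightarrow> f (a + fst w, snd w)" for w
      by (rule l2_tendsto_imp_pointwise[OF d_H f lim])
  qed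
qed

lemma A0_row_in_H:
  assumes "psi \<in> A0 H"
  shows "S_kernel psi z \<in> H"
  using translate_in_H[of "\<lambda>(u, v). cnj (psi (- u) (snd z) v)" "- fst z"] assms
  unfolding A0_def S_kernel_def by (simp add: case_prod_beta)

lemma A0_column_in_H:
  assumes "psi \<in> A0 H"
  shows "(\<lambda>z. cnj (S_kernel psi z p)) \<in> H"
  using translate_in_H[of "\<lambda>(u, y). psi u y (snd p)" "- fst p"] assms
  unfolding A0_def S_kernel_def by (simp add: case_prod_beta)

lemma A0_bounded_on_kernel_span_imp_bounded:
  assumes A0: "psi \<in> A0 H"
    and bdd: "bdd_above {l2norm M (inner_operator M (S_kernel psi) f) | f.
                f \<in> kernel_span K \<and> l2norm M f = 1}"
  shows "\<forall>f\<in>H. inner_operator M (S_kernel psi) f \<in> H"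
    and "\<exists>C. \<forall>f\<in>H. l2norm M (inner_operator M (S_kernel psi) f) \<le> C * l2norm M f"
proof -
  obtain C where "C \<ge> 0" and bound: "\<And>d. d \<in> kernel_span K \<Longrightarrow>
      l2norm M (inner_operator M (S_kernel psi) d) \<le> C * l2norm M d"
    using inner_operator_bound_on_kernel_span[OF bdd] by blast
  note extension = inner_operator_extension[OF A0_row_in_H[OF A0]
      inner_operator_kernel_span_in_H[OF A0_row_in_H[OF A0] A0_column_in_H[OF A0]] \<open>C \<ge> 0\<close> bound]
  show "\<forall>f\<in>H. inner_operator M (S_kernel psi) f \<in> H" using extension(1) by blast
  show "\<exists>C. \<forall>f\<in>H. l2norm M (inner_operator M (S_kernel psi) f) \<le> C * l2norm M f"
    using extension(2) by blast
qed

end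

lemma S_op_eq_inner_operator: "S_op nu lam psi = inner_operator (nu \<Otimes>\<^sub>M lam) (S_kernel psi)"
  unfolding S_op_def inner_operator_def l2inner_def S_kernel_def
  by (simp add: fun_eq_iff case_prod_beta')

theorem proposition5p8:
  fixes nu :: "'g::{topological_ab_group_add, t2_space} measure"
    and lam :: "'y measure"
    and H :: "('g \<times> 'y \<Rightarrow> complex) set"
    and K :: "'g \<times> 'y \<Rightarrow> 'g \<times> 'y \<Rightarrow> complex"
    and psi :: "'g \<Rightarrow> 'y \<Rightarrow> 'y \<Rightarrow> complex"
  assumes "locally compact (UNIV :: 'g set)"
    and "haar_measure nu"
    and "space lam = UNIV"
    and "rkhs_L2 (nu \<Otimes>\<^sub>M lam) H K"
    and "\<And>x y u v. K (x, y) (u, v) = K (0, y) (u - x, v)"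
  shows "psi \<in> A_class nu lam H \<longleftrightarrow>
           psi \<in> A0 H \<and>
           bdd_above {l2norm (nu \<Otimes>\<^sub>M lam) (S_op nu lam psi f) | f.
                        f \<in> kernel_span K \<and> l2norm (nu \<Otimes>\<^sub>M lam) f = 1}"
proof -
  have sets: "sets nu = sets borel" and inv: "\<And>a. distr nu nu (\<lambda>u. a + u) = nu"
    using assms(2) unfolding haar_measure_def by auto
  interpret l2_rkhs_translation "nu \<Otimes>\<^sub>M lam" H K
    using assms(3-5) measurable_translate_fst[OF sets inv] distr_translate_fst[OF sets inv]
    by unfold_locales auto
  show ?thesis
    unfolding A_class_def bounded_on_def S_op_eq_inner_operator
    using kernel_span_subset_H A0_bounded_on_kernel_span_imp_bounded
    by (fastforce intro: bdd_aboveI)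
qed

end
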